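(* Let $\rho=\rho_n>0$ and let $m=m_n>1$ be integers. For $m=2,3,\dots$ let $\tilde\Omega_n(m)=\{\omega\in\Omega:\max_{1\le l\le L_n(\rho)}|C_{n,l}(\rho)|<m\}$. If $\rho\ge\rho_n^+(m)\equiv\frac1m\Big(1+\frac{(m+2)\log n+\log m!}{n\log2}\Big)$, then $\mathbb P\big(\liminf_{n\to\infty}\tilde\Omega_n(m)\big)=1$.
   Context: Let $\mathcal V_n=\{-1,1\}^n$ with nearest-neighbour (hypercube) graph structure. Let $(g(x))_{x\in\mathcal V_n}$, $n\ge1$, be i.i.d. standard Gaussians on $(\Omega,\mathcal F,\mathbb P)$, $\beta>0$, and $w_n(x)=\exp(-\beta\sqrt ng(x))$. For $\rho>0$ let $r_n(\rho)$ be defined by $2^{\rho n}\mathbb P(w_n(x)\ge r_n(\rho))=1$ and $V_n(\rho)=\{x:w_n(x)\ge r_n(\rho)\}$. $C_{n,l}(\rho)$, $1\le l\le L_n(\rho)$, are the vertex sets of the connected components with at least two vertices of the subgraph of the hypercube induced on $V_n(\rho)$. *)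

theory Defs
  imports "HOL-Probability.Probability"
begin

definition cube :: "nat \<Rightarrow> int list set" where
  "cube n = {x. length x = n \<and> set x \<subseteq> {-1, 1}}"

definition cube_adj :: "int list \<Rightarrow> int list \<Rightarrow> bool" where
  "cube_adj x y \<longleftrightarrow> length x = length y \<and> card {i. i < length x \<and> x ! i \<noteq> y ! i} = 1"

definition weight :: "real \<Rightarrow> (nat \<Rightarrow> int list \<Rightarrow> 'a \<Rightarrow> real) \<Rightarrow> nat \<Rightarrow> int list \<Rightarrow> 'a \<Rightarrow> real" where
  "weight \<beta> g n x \<omega> = exp (- \<beta> * sqrt (real n) * g n x \<omega>)"

definition thr :: "'a measure \<Rightarrow> real \<Rightarrow> (nat \<Rightarrow> int list \<Rightarrow> 'a \<Rightarrow> real) \<Rightarrow> nat \<Rightarrow> real \<Rightarrow> real" where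
  "thr M \<beta> g n \<rho> = (THE r. \<forall>x\<in>cube n.
      2 powr (\<rho> * real n) * measure M {\<omega> \<in> space M. weight \<beta> g n x \<omega> \<ge> r} = 1)"

definition Vset :: "'a measure \<Rightarrow> real \<Rightarrow> (nat \<Rightarrow> int list \<Rightarrow> 'a \<Rightarrow> real) \<Rightarrow> nat \<Rightarrow> real \<Rightarrow> 'a \<Rightarrow> int list set" where
  "Vset M \<beta> g n \<rho> \<omega> = {x \<in> cube n. weight \<beta> g n x \<omega> \<ge> thr M \<beta> g n \<rho>}"

definition induced_comp :: "int list set \<Rightarrow> int list \<Rightarrow> int list set" where
  "induced_comp V x = {y. (\<lambda>a b. a \<in> V \<and> b \<in> V \<and> cube_adj a b)\<^sup>*\<^sup>* x y}"

definition induced_components :: "int list set \<Rightarrow> int list set set" where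
  "induced_components V = {induced_comp V x | x. x \<in> V}"

definition clusters :: "'a measure \<Rightarrow> real \<Rightarrow> (nat \<Rightarrow> int list \<Rightarrow> 'a \<Rightarrow> real) \<Rightarrow> nat \<Rightarrow> real \<Rightarrow> 'a \<Rightarrow> int list set set" where
  "clusters M \<beta> g n \<rho> \<omega> = {C \<in> induced_components (Vset M \<beta> g n \<rho> \<omega>). card C \<ge> 2}"

text \<open>tilde Omega_n(m): all clusters have fewer than m vertices (max over empty family = 0).\<close>
definition Omega_tilde :: "'a measure \<Rightarrow> real \<Rightarrow> (nat \<Rightarrow> int list \<Rightarrow> 'a \<Rightarrow> real) \<Rightarrow> nat \<Rightarrow> real \<Rightarrow> nat \<Rightarrow> 'a set" where
  "Omega_tilde M \<beta> g n \<rho> m = {\<omega> \<in> space M. \<forall>C \<in> clusters M \<beta> g n \<rho> \<omega>. card C < m}"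

definition rho_plus :: "nat \<Rightarrow> nat \<Rightarrow> real" where
  "rho_plus n m = (1 / real m) * (1 + ((real m + 2) * ln (real n) + ln (fact m)) / (real n * ln 2))"

end

theory Submission
  imports Defs
begin

text \<open>A cluster with at least m vertices contains a connected set of exactly m vertices of
  V_n(rho), and every connected m-set of the hypercube can be listed so that each vertex after the
  first is adjacent to an earlier one. There are at most 2^n (m-1)! n^(m-1) such lists, and by
  independence all m vertices of a fixed list lie in V_n(rho) with probability 2^(-rho n m). For
  rho >= rho_n^+(m) the union bound makes the probability of a cluster of size m at most 1/n^2,
  which is summable, so Borel--Cantelli gives the claim.\<close>

section \<open>Lists of vertices spanning connected sets\<close>

fun connected_seqs :: "'v set \<Rightarrow> ('v \<Rightarrow> 'v \<Rightarrow> bool) \<Rightarrow> nat \<Rightarrow> 'v list set" where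
  "connected_seqs X E 0 = {[]}"
| "connected_seqs X E (Suc k) = {xs @ [y] | xs y. xs \<in> connected_seqs X E k \<and> y \<in> X \<and> y \<notin> set xs \<and>
      (xs = [] \<or> (\<exists>z\<in>set xs. E z y))}"

lemma connected_seqs_props:
  "xs \<in> connected_seqs X E k \<Longrightarrow> length xs = k \<and> distinct xs \<and> set xs \<subseteq> X"
  by (induction k arbitrary: xs) fastforce+

lemma connected_seqsD:
  assumes "xs \<in> connected_seqs X E k"
  shows "length xs = k" and "distinct xs" and "set xs \<subseteq> X"
  using connected_seqs_props[OF assms] by auto

lemma connected_seqs_empty: "card X < k \<Longrightarrow> finite X \<Longrightarrow> connected_seqs X E k = {}"
  by (metis connected_seqsD card_mono distinct_card equals0I leD)

lemma connected_seqs_Suc_subset: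
  "connected_seqs X E (Suc k) \<subseteq> (\<lambda>(xs, y). xs @ [y]) `
     (SIGMA xs:connected_seqs X E k. {y \<in> X. xs = [] \<or> (\<exists>z\<in>set xs. E z y)})"
  by (auto simp: image_iff)

lemma finite_connected_seqs: "finite X \<Longrightarrow> finite (connected_seqs X E k)"
proof (induction k)
  case (Suc k)
  show ?case
    by (rule finite_subset[OF connected_seqs_Suc_subset]) (use Suc in auto)
qed simp

lemma card_connected_seqs_Suc_le:
  assumes X: "finite X" and deg: "\<And>x. x \<in> X \<Longrightarrow> card {y \<in> X. E x y} \<le> d"
  shows "card (connected_seqs X E (Suc k))
           \<le> card (connected_seqs X E k) * (if k = 0 then card X else k * d)"
proof -
  define ext where "ext xs = {y \<in> X. xs = [] \<or> (\<exists>z\<in>set xs. E z y)}" for xs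
  have ext_le: "card (ext xs) \<le> (if k = 0 then card X else k * d)"
    if xs: "xs \<in> connected_seqs X E k" for xs
  proof (cases "k = 0")
    case False
    hence "xs \<noteq> []" using connected_seqsD(1)[OF xs] by auto
    hence "ext xs = (\<Union>z\<in>set xs. {y \<in> X. E z y})" by (auto simp: ext_def)
    hence "card (ext xs) \<le> (\<Sum>z\<in>set xs. card {y \<in> X. E z y})" by (simp add: card_UN_le)
    also have "\<dots> \<le> (\<Sum>z\<in>set xs. d)" using connected_seqsD(3)[OF xs] deg by (intro sum_mono) auto
    also have "\<dots> = k * d" using connected_seqsD[OF xs] by (simp add: distinct_card)
    finally show ?thesis using False by simp
  qed (use X in \<open>auto simp: ext_def intro: card_mono\<close>)
  have "card (connected_seqs X E (Suc k)) \<le> card (SIGMA xs:connected_seqs X E k. ext xs)"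
    using connected_seqs_Suc_subset[of X E k] X
    by (intro order.trans[OF card_mono card_image_le])
       (auto simp: ext_def finite_connected_seqs simp del: connected_seqs.simps)
  also have "\<dots> = (\<Sum>xs\<in>connected_seqs X E k. card (ext xs))"
    using X by (intro card_SigmaI) (auto simp: ext_def finite_connected_seqs)
  also have "\<dots> \<le> card (connected_seqs X E k) * (if k = 0 then card X else k * d)"
    using sum_bounded_above[of "connected_seqs X E k" "\<lambda>xs. card (ext xs)"] ext_le by simp
  finally show ?thesis .
qed

lemma card_connected_seqs_le:
  assumes "finite X" and "\<And>x. x \<in> X \<Longrightarrow> card {y \<in> X. E x y} \<le> d"
  shows "card (connected_seqs X E (Suc k)) \<le> card X * fact k * d ^ k"
proof (induction k)
  case (Suc k)
  have "card (connected_seqs X E (Suc (Suc k))) \<le> card (connected_seqs X E (Suc k)) * (Suc k * d)"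
    using card_connected_seqs_Suc_le[OF assms, where k="Suc k"] by simp
  also have "\<dots> \<le> card X * fact k * d ^ k * (Suc k * d)"
    using Suc.IH by (rule mult_right_mono) simp
  finally show ?case by (simp add: algebra_simps)
qed (use card_connected_seqs_Suc_le[OF assms, where k=0] in simp)

lemma cube_eq_lists: "cube n = {xs. set xs \<subseteq> {-1, 1} \<and> length xs = n}"
  by (auto simp: cube_def)

lemma finite_cube: "finite (cube n)"
  by (simp add: cube_eq_lists finite_lists_length_eq)

lemma card_cube: "card (cube n) = 2 ^ n"
  by (simp add: cube_eq_lists card_lists_length_eq numeral_2_eq_2)

lemma replicate_in_cube: "replicate n 1 \<in> cube n"
  by (simp add: cube_def set_replicate_conv_if)

lemma cube_adj_flip:
  assumes x: "x \<in> cube n" and y: "y \<in> cube n" and "cube_adj x y"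
  obtains i where "i < n" and "y = x[i := - (x ! i)]"
proof -
  have lx: "length x = n" and ly: "length y = n" using x y by (auto simp: cube_def)
  have "card {i. i < n \<and> x ! i \<noteq> y ! i} = 1" using \<open>cube_adj x y\<close> lx ly by (simp add: cube_adj_def)
  then obtain i where D: "{i. i < n \<and> x ! i \<noteq> y ! i} = {i}" by (auto simp: card_Suc_eq)
  hence i: "i < n" "x ! i \<noteq> y ! i" by auto
  have "set x \<subseteq> {-1, 1}" "set y \<subseteq> {-1, 1}" using x y by (auto simp: cube_def)
  hence "x ! i \<in> {-1, 1}" "y ! i \<in> {-1, 1}" using i lx ly nth_mem by (metis subsetD)+
  hence "y ! i = - (x ! i)" using i by auto
  moreover have "y ! j = x ! j" if "j < n" "j \<noteq> i" for j
  proof (rule ccontr)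
    assume "y ! j \<noteq> x ! j"
    hence "j \<in> {i. i < n \<and> x ! i \<noteq> y ! i}" using that by auto
    thus False using D that by simp
  qed
  ultimately have "y = x[i := - (x ! i)]"
    using i lx ly by (intro nth_equalityI) (auto simp: nth_list_update)
  with i(1) show thesis by (rule that)
qed

lemma card_cube_neighbours_le: "x \<in> cube n \<Longrightarrow> card {y \<in> cube n. cube_adj x y} \<le> n"
proof -
  assume x: "x \<in> cube n"
  have "{y \<in> cube n. cube_adj x y} \<subseteq> (\<lambda>i. x[i := - (x ! i)]) ` {..<n}"
    using cube_adj_flip[OF x] by blast
  hence "card {y \<in> cube n. cube_adj x y} \<le> card ((\<lambda>i. x[i := - (x ! i)]) ` {..<n})"
    by (intro card_mono) auto
  also have "\<dots> \<le> n" using card_image_le[of "{..<n}"] by simp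
  finally show ?thesis .
qed

lemma card_connected_seqs_cube_le:
  "card (connected_seqs (cube n) cube_adj (Suc k)) \<le> 2 ^ n * fact k * n ^ k"
  using card_connected_seqs_le[OF finite_cube card_cube_neighbours_le] by (simp add: card_cube)

section \<open>Large components of induced subgraphs of the hypercube\<close>

lemma induced_comp_subset: "induced_comp V x \<subseteq> insert x V"
proof
  fix y assume "y \<in> induced_comp V x"
  hence "(\<lambda>a b. a \<in> V \<and> b \<in> V \<and> cube_adj a b)\<^sup>*\<^sup>* x y" by (simp add: induced_comp_def)
  thus "y \<in> insert x V" by (induction rule: rtranclp_induct) auto
qed

lemma rtranclp_exit:
  "R\<^sup>*\<^sup>* a b \<Longrightarrow> a \<in> S \<Longrightarrow> b \<notin> S \<Longrightarrow> \<exists>u v. u \<in> S \<and> v \<notin> S \<and> R u v \<and> R\<^sup>*\<^sup>* a v"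
proof (induction rule: rtranclp_induct)
  case (step c b)
  thus ?case by (cases "c \<in> S") (auto intro: rtranclp.rtrancl_into_rtrancl)
qed simp

lemma connected_seqs_subset_induced_comp:
  "xs \<in> connected_seqs X cube_adj k \<Longrightarrow> set xs \<subseteq> V \<Longrightarrow> xs \<noteq> [] \<Longrightarrow>
     set xs \<subseteq> induced_comp V (hd xs)"
proof (induction k arbitrary: xs)
  case (Suc k)
  then obtain ys y where xs: "xs = ys @ [y]" "ys \<in> connected_seqs X cube_adj k"
    "ys = [] \<or> (\<exists>z\<in>set ys. cube_adj z y)" by auto
  show ?case
  proof (cases "ys = []")
    case True
    thus ?thesis using xs by (simp add: induced_comp_def)
  next
    case False
    then obtain z where z: "z \<in> set ys" "cube_adj z y" using xs by auto
    have IH: "set ys \<subseteq> induced_comp V (hd ys)" using Suc.IH[OF xs(2)] Suc.prems xs False by simp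
    moreover have "y \<in> V" "z \<in> V" using Suc.prems xs z by auto
    ultimately have "y \<in> induced_comp V (hd ys)" using z
      by (auto simp: induced_comp_def intro: rtranclp.rtrancl_into_rtrancl)
    thus ?thesis using IH xs False by simp
  qed
qed simp

text \<open>Extend the list inside the component: a path from x0 to a vertex not yet listed must leave
  the listed set along an edge, whose endpoint is the next vertex.\<close>
lemma induced_comp_contains_connected_seq:
  assumes x0: "x0 \<in> V" and V: "V \<subseteq> X" "finite X"
    and k: "1 \<le> k" "k \<le> card (induced_comp V x0)"
  shows "\<exists>xs\<in>connected_seqs X cube_adj k. set xs \<subseteq> induced_comp V x0 \<and> x0 \<in> set xs"
  using k
proof (induction k)
  case (Suc k)
  show ?case
  proof (cases "k = 0")
    case True
    have "[x0] \<in> connected_seqs X cube_adj (Suc 0)" using x0 V by auto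
    thus ?thesis using True by (force simp: induced_comp_def)
  next
    case False
    then obtain xs where xs: "xs \<in> connected_seqs X cube_adj k" "set xs \<subseteq> induced_comp V x0"
      "x0 \<in> set xs" using Suc by auto
    have fin: "finite (induced_comp V x0)"
      using V x0 induced_comp_subset[of V x0] by (auto intro: finite_subset)
    have "card (set xs) < card (induced_comp V x0)"
      using connected_seqsD[OF xs(1)] Suc.prems by (simp add: distinct_card)
    then obtain y where y: "y \<in> induced_comp V x0" "y \<notin> set xs"
      using xs(2) by (metis card_mono fin not_less subsetI subset_antisym)
    let ?R = "\<lambda>a b. a \<in> V \<and> b \<in> V \<and> cube_adj a b"
    have "?R\<^sup>*\<^sup>* x0 y" using y by (simp add: induced_comp_def)
    from rtranclp_exit[OF this xs(3) y(2)] obtain u v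
      where uv: "u \<in> set xs" "v \<notin> set xs" "?R u v" "?R\<^sup>*\<^sup>* x0 v" by blast
    have "v \<in> induced_comp V x0" using uv by (simp add: induced_comp_def)
    hence "set (xs @ [v]) \<subseteq> induced_comp V x0 \<and> x0 \<in> set (xs @ [v])" using xs by simp
    moreover have "xs @ [v] \<in> connected_seqs X cube_adj (Suc k)" using uv xs(1) V by auto
    ultimately show ?thesis by blast
  qed
qed simp

lemma large_induced_component_iff:
  assumes V: "V \<subseteq> X" "finite X" and m: "1 \<le> m"
  shows "(\<exists>C \<in> induced_components V. m \<le> card C) \<longleftrightarrow> (\<exists>xs \<in> connected_seqs X cube_adj m. set xs \<subseteq> V)"
proof
  assume "\<exists>C \<in> induced_components V. m \<le> card C"
  then obtain x0 where x0: "x0 \<in> V" "m \<le> card (induced_comp V x0)"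
    by (auto simp: induced_components_def)
  with induced_comp_contains_connected_seq[OF x0(1) V m] induced_comp_subset[of V x0]
  show "\<exists>xs \<in> connected_seqs X cube_adj m. set xs \<subseteq> V" by blast
next
  assume "\<exists>xs \<in> connected_seqs X cube_adj m. set xs \<subseteq> V"
  then obtain xs where xs: "xs \<in> connected_seqs X cube_adj m" "set xs \<subseteq> V" by blast
  hence ne: "xs \<noteq> []" and card_xs: "card (set xs) = m"
    using connected_seqsD[OF xs(1)] m by (auto simp: distinct_card)
  have "finite (induced_comp V (hd xs))"
    using V induced_comp_subset[of V "hd xs"] by (auto intro: finite_subset)
  hence "m \<le> card (induced_comp V (hd xs))"
    using card_mono connected_seqs_subset_induced_comp[OF xs ne] card_xs by metis
  moreover have "induced_comp V (hd xs) \<in> induced_components V"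
    using xs(2) hd_in_set[OF ne] by (auto simp: induced_components_def)
  ultimately show "\<exists>C \<in> induced_components V. m \<le> card C" by blast
qed

lemma compl_Omega_tilde_eq:
  assumes "2 \<le> m"
  shows "space M - Omega_tilde M \<beta> g n \<rho> m
           = (\<Union>xs\<in>connected_seqs (cube n) cube_adj m. {\<omega> \<in> space M. set xs \<subseteq> Vset M \<beta> g n \<rho> \<omega>})"
proof -
  have "\<not> (\<forall>C\<in>clusters M \<beta> g n \<rho> \<omega>. card C < m)
          \<longleftrightarrow> (\<exists>xs\<in>connected_seqs (cube n) cube_adj m. set xs \<subseteq> Vset M \<beta> g n \<rho> \<omega>)" for \<omega>
  proof -
    have "\<not> (\<forall>C\<in>clusters M \<beta> g n \<rho> \<omega>. card C < m)
        \<longleftrightarrow> (\<exists>C\<in>induced_components (Vset M \<beta> g n \<rho> \<omega>). m \<le> card C)"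
      using assms by (auto simp: clusters_def not_less)
    also have "\<dots> \<longleftrightarrow> (\<exists>xs\<in>connected_seqs (cube n) cube_adj m. set xs \<subseteq> Vset M \<beta> g n \<rho> \<omega>)"
      using assms by (intro large_induced_component_iff finite_cube) (auto simp: Vset_def)
    finally show ?thesis .
  qed
  thus ?thesis unfolding Omega_tilde_def by blast
qed

section \<open>Distributions with a nowhere vanishing density\<close>

context
  fixes f :: "real \<Rightarrow> ennreal"
  assumes prob_space_density: "prob_space (density lborel f)"
    and density_measurable: "f \<in> borel_measurable lborel"
    and density_nonzero: "\<And>t. f t \<noteq> 0"
begin

lemma real_distribution_density: "real_distribution (density lborel f)"
  using prob_space_density by (simp add: real_distribution_def real_distribution_axioms_def)

lemma null_sets_density_nonzero_iff: "A \<in> null_sets (density lborel f) \<longleftrightarrow> A \<in> null_sets lborel"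
  using null_sets_density_iff[OF density_measurable] density_nonzero
  by (auto simp: AE_iff_null_sets intro: AE_not_in)

lemma isCont_cdf_density: "isCont (cdf (density lborel f)) x"
proof -
  interpret real_distribution "density lborel f" by (rule real_distribution_density)
  have "{x} \<in> null_sets (density lborel f)"
    by (simp add: null_sets_density_nonzero_iff emeasure_lborel_countable null_setsI)
  thus ?thesis by (simp add: isCont_cdf measure_eq_0_null_sets)
qed

lemma cdf_density_strict_mono: "a < b \<Longrightarrow> cdf (density lborel f) a < cdf (density lborel f) b"
proof -
  assume "a < b"
  interpret real_distribution "density lborel f" by (rule real_distribution_density)
  have "{a<..b} \<notin> null_sets lborel" using \<open>a < b\<close> by (simp add: null_sets_def)
  hence "{a<..b} \<notin> null_sets (density lborel f)" by (simp add: null_sets_density_nonzero_iff)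
  hence "prob {a<..b} \<noteq> 0" by (simp add: prob_eq_0 AE_iff_null_sets)
  hence "prob {a<..b} > 0" by (simp add: zero_less_measure_iff)
  thus ?thesis using cdf_diff_eq[OF \<open>a < b\<close>] by simp
qed

lemma cdf_density_eq_unique:
  assumes "0 < q" "q < 1"
  shows "\<exists>!t. cdf (density lborel f) t = q"
proof -
  interpret real_distribution "density lborel f" by (rule real_distribution_density)
  obtain a where a: "cdf (density lborel f) a < q"
    using order_tendstoD(2)[OF cdf_lim_at_bot assms(1)]
    by (auto simp: eventually_at_bot_linorder)
  obtain b where b: "cdf (density lborel f) b > q"
    using order_tendstoD(1)[OF cdf_lim_at_top_prob assms(2)]
    by (auto simp: eventually_at_top_linorder)
  have "a \<le> b" using a b cdf_nondecreasing[of b a] by (cases "a \<le> b") auto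
  then obtain t where "cdf (density lborel f) t = q"
    using IVT[of "cdf (density lborel f)" a q b] a b isCont_cdf_density by auto
  moreover have "s = t" if "cdf (density lborel f) s = cdf (density lborel f) t" for s t
    using that by (cases s t rule: linorder_cases) (auto dest: cdf_density_strict_mono)
  ultimately show ?thesis by metis
qed

end

section \<open>Probability estimates\<close>

lemma (in prob_space) prob_INT_indep_vars:
  assumes "indep_vars M' X I" and "J \<subseteq> I" "finite J" "J \<noteq> {}"
    and "\<And>j. j \<in> J \<Longrightarrow> A j \<in> sets (M' j)"
  shows "prob (\<Inter>j\<in>J. X j -` A j \<inter> space M) = (\<Prod>j\<in>J. prob (X j -` A j \<inter> space M))"
  using assms by (intro indep_setsD[where F="\<lambda>i. {X i -` A \<inter> space M | A. A \<in> sets (M' i)}"])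
    (auto simp: indep_vars_def2)

lemma exp_ge_iff:
  fixes c r t :: real
  assumes "c > 0" "r > 0"
  shows "r \<le> exp (- c * t) \<longleftrightarrow> t \<le> - ln r / c"
proof -
  have "r \<le> exp (- c * t) \<longleftrightarrow> ln r \<le> - c * t"
    using assms by (metis ln_exp ln_le_cancel_iff exp_gt_zero)
  also have "\<dots> \<longleftrightarrow> c * t \<le> - ln r" by linarith
  also have "\<dots> \<longleftrightarrow> t \<le> - ln r / c" by (subst pos_le_divide_eq[OF assms(1)]) (simp add: mult.commute)
  finally show ?thesis .
qed

lemma rho_plus_count_bound:
  fixes n m :: nat and \<rho> :: real
  assumes n: "n \<ge> 1" and m: "m \<ge> 2" and \<rho>: "\<rho> \<ge> rho_plus n m"
  shows "real (2 ^ n * fact (m - 1) * n ^ (m - 1)) * (2 powr (- (\<rho> * real n))) ^ m \<le> 1 / real n ^ 2"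
proof -
  define L where "L = (real m + 2) * ln (real n) + ln (fact m)"
  have n0: "real n > 0" using n by simp
  have "\<rho> * real n * real m \<ge> rho_plus n m * real n * real m"
    using \<rho> n m by (intro mult_right_mono) auto
  also have "rho_plus n m * real n * real m = real n + L / ln 2"
    unfolding rho_plus_def L_def using n0 m by (simp add: field_simps)
  finally have "(2 powr (- (\<rho> * real n))) ^ m \<le> 2 powr (- (real n + L / ln 2))"
    by (simp add: powr_power mult.commute)
  also have "\<dots> = exp (- (real n * ln 2 + L))"
  proof -
    have "(- (real n + L / ln 2)) * ln 2 = - (real n * ln 2 + L)" by (simp add: field_simps)
    thus ?thesis by (simp add: powr_def)
  qed
  also have "\<dots> = inverse (2 ^ n) * inverse (real n ^ (m + 2) * fact m)"
  proof -
    have "exp ((real m + 2) * ln (real n)) = real n ^ (m + 2)"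
      using n0 exp_of_nat_mult[of "m + 2" "ln (real n)"] by (simp add: add.commute)
    hence "exp L = real n ^ (m + 2) * fact m" by (simp add: L_def exp_add)
    moreover have "exp (real n * ln 2) = 2 ^ n" by (simp add: exp_of_nat_mult)
    ultimately show ?thesis by (simp add: exp_diff exp_minus divide_inverse)
  qed
  finally have q:
    "(2 powr (- (\<rho> * real n))) ^ m \<le> inverse (2 ^ n) * inverse (real n ^ (m + 2) * fact m)" .
  have "fact m = real m * fact (m - 1)" and "real n ^ (m + 2) = real n ^ (m - 1) * real n ^ 3"
    using m by (simp_all add: fact_reduce power_add[symmetric])
  hence "real (2 ^ n * fact (m - 1) * n ^ (m - 1))
          * (inverse (2 ^ n) * inverse (real n ^ (m + 2) * fact m)) = 1 / (real m * real n ^ 3)"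
    using n0 m by (simp add: field_simps)
  also have "\<dots> \<le> 1 / real n ^ 2"
  proof -
    have "real n ^ 2 \<le> real n ^ 3" using n by (intro power_increasing) auto
    also have "\<dots> \<le> real m * real n ^ 3" using m mult_right_mono[of 1 "real m" "real n ^ 3"] by simp
    finally show ?thesis using n0 m by (intro divide_left_mono) auto
  qed
  finally show ?thesis using q by (meson mult_left_mono of_nat_0_le_iff order_trans)
qed

lemma (in prob_space) prob_eventually_notin:
  assumes "\<And>n. A n \<in> events" and "summable (\<lambda>n. prob (A n))"
  shows "prob {\<omega> \<in> space M. \<exists>N. \<forall>n\<ge>N. \<omega> \<notin> A n} = 1"
proof -
  have "AE \<omega> in M. eventually (\<lambda>n. \<omega> \<in> space M - A n) sequentially"
    using assms by (intro borel_cantelli_AE1) (auto simp: emeasure_eq_measure)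
  hence ae: "AE \<omega> in M. \<exists>N. \<forall>n\<ge>N. \<omega> \<notin> A n"
    by (auto simp: eventually_sequentially)
  have ev: "{\<omega> \<in> space M. \<exists>N. \<forall>n\<ge>N. \<omega> \<notin> A n} \<in> events"
  proof -
    have "{\<omega> \<in> space M. \<exists>N. \<forall>n\<ge>N. \<omega> \<notin> A n} = (\<Union>N. \<Inter>n\<in>{N..}. space M - A n)"
      by blast
    also have "\<dots> \<in> events" using assms(1) by measurable
    finally show ?thesis .
  qed
  show ?thesis by (rule prob_Collect_eq_1[THEN iffD2, OF ev ae])
qed

locale hypercube_weights = prob_space M for M :: "'a measure" +
  fixes \<beta> :: real and g :: "nat \<Rightarrow> int list \<Rightarrow> 'a \<Rightarrow> real" and f :: "real \<Rightarrow> ennreal"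
  assumes beta_pos: "\<beta> > 0"
    and indep: "indep_vars (\<lambda>_. borel) (\<lambda>(n, x). g n x) {(n, x). n \<ge> 1 \<and> x \<in> cube n}"
    and distributed: "\<And>n x. n \<ge> 1 \<Longrightarrow> x \<in> cube n \<Longrightarrow> distributed M lborel (g n x) f"
    and density_nonzero: "\<And>t. f t \<noteq> 0"
begin

lemma density_measurable: "f \<in> borel_measurable lborel"
  using distributed[OF _ replicate_in_cube, of 1] by (rule distributed_borel_measurable) simp

lemma prob_space_density: "prob_space (density lborel f)"
proof -
  have "distributed M lborel (g 1 (replicate 1 1)) f"
    by (rule distributed[OF _ replicate_in_cube]) simp
  thus ?thesis
    by (metis distributed_distr_eq_density distributed_measurable prob_space_distr)
qed

lemma weight_ge_eq_vimage:
  "{\<omega> \<in> space M. r \<le> weight \<beta> g n x \<omega>} = g n x -` {t. r \<le> exp (- \<beta> * sqrt (real n) * t)} \<inter> space M"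
  by (auto simp: weight_def)

lemma weight_ge_in_events:
  "n \<ge> 1 \<Longrightarrow> x \<in> cube n \<Longrightarrow> {\<omega> \<in> space M. r \<le> weight \<beta> g n x \<omega>} \<in> events"
  unfolding weight_ge_eq_vimage
  by (intro measurable_sets[OF distributed_measurable[OF distributed]]) auto

lemma prob_weight_ge:
  assumes "n \<ge> 1" "x \<in> cube n"
  shows "prob {\<omega> \<in> space M. r \<le> weight \<beta> g n x \<omega>}
           = (if r \<le> 0 then 1 else cdf (density lborel f) (- ln r / (\<beta> * sqrt (real n))))"
proof -
  interpret D: real_distribution "density lborel f"
    by (rule real_distribution_density[OF prob_space_density density_measurable density_nonzero])
  have c: "\<beta> * sqrt (real n) > 0" using assms beta_pos by simp
  have "prob {\<omega> \<in> space M. r \<le> weight \<beta> g n x \<omega>}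
      = D.prob {t. r \<le> exp (- \<beta> * sqrt (real n) * t)}"
    unfolding weight_ge_eq_vimage distributed_distr_eq_density[OF distributed[OF assms], symmetric]
    using distributed_measurable[OF distributed[OF assms]] by (subst measure_distr) auto
  also have "{t. r \<le> exp (- \<beta> * sqrt (real n) * t)}
      = (if r \<le> 0 then UNIV else {.. - ln r / (\<beta> * sqrt (real n))})"
    using exp_ge_iff[OF c] by (auto intro: order_trans[OF _ less_imp_le[OF exp_gt_zero]])
  moreover have "D.prob UNIV = 1" using D.prob_space by simp
  ultimately show ?thesis by (simp add: cdf_def)
qed

lemma prob_weight_ge_thr:
  assumes n: "n \<ge> 1" and \<rho>: "\<rho> > 0" and x: "x \<in> cube n"
  shows "prob {\<omega> \<in> space M. thr M \<beta> g n \<rho> \<le> weight \<beta> g n x \<omega>} = 2 powr (- (\<rho> * real n))"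
proof -
  define c where "c = \<beta> * sqrt (real n)"
  define q where "q = 2 powr (- (\<rho> * real n))"
  have c: "c > 0" using n beta_pos by (simp add: c_def)
  have "q < 2 powr 0" unfolding q_def using \<rho> n by (intro powr_less_mono) auto
  hence q: "0 < q" "q < 1" by (auto simp: q_def)
  obtain t where t: "cdf (density lborel f) t = q"
    and t_unique: "\<And>s. cdf (density lborel f) s = q \<Longrightarrow> s = t"
    using cdf_density_eq_unique[OF prob_space_density density_measurable density_nonzero q] by metis
  have q_iff: "2 powr (\<rho> * real n) * p = 1 \<longleftrightarrow> p = q" for p
    by (auto simp: q_def powr_minus field_simps)
  have level: "prob {\<omega> \<in> space M. r \<le> weight \<beta> g n y \<omega>} = q \<longleftrightarrow> r = exp (- c * t)"
    if y: "y \<in> cube n" for r y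
  proof (cases "r \<le> 0")
    case True
    hence "r \<noteq> exp (- c * t)" using exp_gt_zero[of "- c * t"] by linarith
    thus ?thesis using True q prob_weight_ge[OF n y] by simp
  next
    case False
    have "prob {\<omega> \<in> space M. r \<le> weight \<beta> g n y \<omega>} = cdf (density lborel f) (- ln r / c)"
      using False prob_weight_ge[OF n y] by (simp add: c_def)
    also have "\<dots> = q \<longleftrightarrow> - ln r / c = t" using t t_unique by blast
    also have "\<dots> \<longleftrightarrow> ln r = - c * t" using c by (auto simp: field_simps)
    also have "\<dots> \<longleftrightarrow> r = exp (- c * t)" using False by (metis exp_ln ln_exp not_le)
    finally show ?thesis .
  qed
  txt \<open>The defining description of thr has a unique solution: all vertices share the tail
    function r \<mapsto> P(w \<ge> r), which takes the value q only at exp (- c t).\<close>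
  have "thr M \<beta> g n \<rho> = exp (- c * t)"
    unfolding thr_def
  proof (rule the_equality)
    show "\<forall>y\<in>cube n. 2 powr (\<rho> * real n) * prob {\<omega> \<in> space M. exp (- c * t) \<le> weight \<beta> g n y \<omega>} = 1"
      using level q_iff by blast
    fix r assume "\<forall>y\<in>cube n. 2 powr (\<rho> * real n) * prob {\<omega> \<in> space M. r \<le> weight \<beta> g n y \<omega>} = 1"
    thus "r = exp (- c * t)" using level[OF replicate_in_cube] q_iff replicate_in_cube by blast
  qed
  thus ?thesis using level[OF x] by (simp add: q_def)
qed

lemma subset_Vset_eq_INT:
  "xs \<noteq> [] \<Longrightarrow> set xs \<subseteq> cube n \<Longrightarrow> {\<omega> \<in> space M. set xs \<subseteq> Vset M \<beta> g n \<rho> \<omega>}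
     = (\<Inter>x\<in>set xs. {\<omega> \<in> space M. thr M \<beta> g n \<rho> \<le> weight \<beta> g n x \<omega>})"
  by (cases xs) (auto simp: Vset_def)

lemma subset_Vset_in_events:
  "n \<ge> 1 \<Longrightarrow> xs \<noteq> [] \<Longrightarrow> set xs \<subseteq> cube n \<Longrightarrow> {\<omega> \<in> space M. set xs \<subseteq> Vset M \<beta> g n \<rho> \<omega>} \<in> events"
  by (auto simp: subset_Vset_eq_INT intro!: sets.finite_INT weight_ge_in_events)

lemma prob_subset_Vset:
  assumes n: "n \<ge> 1" and \<rho>: "\<rho> > 0" and xs: "distinct xs" "xs \<noteq> []" "set xs \<subseteq> cube n"
  shows "prob {\<omega> \<in> space M. set xs \<subseteq> Vset M \<beta> g n \<rho> \<omega>} = (2 powr (- (\<rho> * real n))) ^ length xs"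
proof -
  define A where "A = {t. thr M \<beta> g n \<rho> \<le> exp (- \<beta> * sqrt (real n) * t)}"
  have A: "A \<in> sets borel" unfolding A_def by measurable
  have "{\<omega> \<in> space M. set xs \<subseteq> Vset M \<beta> g n \<rho> \<omega>}
      = (\<Inter>j\<in>Pair n ` set xs. (\<lambda>(n, x). g n x) j -` A \<inter> space M)"
    using xs by (simp add: subset_Vset_eq_INT weight_ge_eq_vimage A_def)
  also have "prob \<dots> = (\<Prod>j\<in>Pair n ` set xs. prob ((\<lambda>(n, x). g n x) j -` A \<inter> space M))"
    by (rule prob_INT_indep_vars[OF indep]) (use n xs A in auto)
  also have "\<dots> = (\<Prod>x\<in>set xs. prob {\<omega> \<in> space M. thr M \<beta> g n \<rho> \<le> weight \<beta> g n x \<omega>})"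
    by (subst prod.reindex) (auto simp: inj_on_def weight_ge_eq_vimage A_def)
  also have "\<dots> = (\<Prod>x\<in>set xs. 2 powr (- (\<rho> * real n)))"
    using prob_weight_ge_thr[OF n \<rho>] xs by (intro prod.cong) auto
  finally show ?thesis using xs by (simp add: distinct_card)
qed

lemma compl_Omega_tilde_in_events:
  assumes "2 \<le> m"
  shows "space M - Omega_tilde M \<beta> g n \<rho> m \<in> events"
proof (cases "n = 0")
  case True
  txt \<open>No measurability of g 0 is assumed; the union is empty since cube 0 is a single point.\<close>
  hence "connected_seqs (cube n) cube_adj m = {}"
    using assms by (intro connected_seqs_empty) (simp_all add: card_cube finite_cube)
  thus ?thesis by (simp add: compl_Omega_tilde_eq[OF assms])
next
  case False
  show ?thesis unfolding compl_Omega_tilde_eq[OF assms]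
    using False assms connected_seqsD
    by (intro sets.finite_UN finite_connected_seqs finite_cube subset_Vset_in_events) fastforce+
qed

lemma prob_compl_Omega_tilde_le:
  assumes n: "n \<ge> 1" and \<rho>: "\<rho> > 0" "\<rho> \<ge> rho_plus n m" and m: "2 \<le> m"
  shows "prob (space M - Omega_tilde M \<beta> g n \<rho> m) \<le> 1 / real n ^ 2"
proof -
  let ?S = "connected_seqs (cube n) cube_adj m"
  let ?E = "\<lambda>xs. {\<omega> \<in> space M. set xs \<subseteq> Vset M \<beta> g n \<rho> \<omega>}"
  have xs: "distinct xs" "xs \<noteq> []" "set xs \<subseteq> cube n" "length xs = m" if "xs \<in> ?S" for xs
    using connected_seqsD[OF that] m by auto
  have "prob (space M - Omega_tilde M \<beta> g n \<rho> m) \<le> (\<Sum>xs\<in>?S. prob (?E xs))"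
    unfolding compl_Omega_tilde_eq[OF m]
    using xs n
    by (intro measure_UNION_le finite_connected_seqs finite_cube subset_Vset_in_events) auto
  also have "\<dots> = real (card ?S) * (2 powr (- (\<rho> * real n))) ^ m"
    using xs prob_subset_Vset[OF n \<rho>(1)] by simp
  also have "\<dots> \<le> real (2 ^ n * fact (m - 1) * n ^ (m - 1)) * (2 powr (- (\<rho> * real n))) ^ m"
  proof -
    have "card ?S \<le> 2 ^ n * fact (m - 1) * n ^ (m - 1)"
      using card_connected_seqs_cube_le[of n "m - 1"] m by simp
    hence "real (card ?S) \<le> real (2 ^ n * fact (m - 1) * n ^ (m - 1))" by (simp only: of_nat_le_iff)
    thus ?thesis by (rule mult_right_mono) simp
  qed
  also have "\<dots> \<le> 1 / real n ^ 2"
    by (rule rho_plus_count_bound[OF n m \<rho>(2)])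
  finally show ?thesis .
qed

theorem prob_eventually_Omega_tilde:
  assumes \<rho>: "\<And>n. \<rho> n > 0" "\<And>n. n \<ge> 1 \<Longrightarrow> \<rho> n \<ge> rho_plus n (m n)" and m: "\<And>n. 2 \<le> m n"
  shows "prob {\<omega> \<in> space M. \<exists>N. \<forall>n\<ge>N. \<omega> \<in> Omega_tilde M \<beta> g n (\<rho> n) (m n)} = 1"
proof -
  define A where "A n = space M - Omega_tilde M \<beta> g n (\<rho> n) (m n)" for n
  have "summable (\<lambda>n. prob (A n))"
  proof (rule summable_comparison_test'[OF inverse_power_summable[of 2]])
    fix n :: nat assume "n \<ge> 1"
    thus "norm (prob (A n)) \<le> inverse (real n ^ 2)"
      using prob_compl_Omega_tilde_le[OF _ \<rho>(1) \<rho>(2) m] by (simp add: A_def divide_inverse)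
  qed simp
  hence "prob {\<omega> \<in> space M. \<exists>N. \<forall>n\<ge>N. \<omega> \<notin> A n} = 1"
    using compl_Omega_tilde_in_events[OF m] by (intro prob_eventually_notin) (simp_all add: A_def)
  moreover have "{\<omega> \<in> space M. \<exists>N. \<forall>n\<ge>N. \<omega> \<notin> A n}
      = {\<omega> \<in> space M. \<exists>N. \<forall>n\<ge>N. \<omega> \<in> Omega_tilde M \<beta> g n (\<rho> n) (m n)}"
    by (auto simp: A_def)
  ultimately show ?thesis by simp
qed

end

theorem lemma2p2:
  fixes M :: "'a measure" and g :: "nat \<Rightarrow> int list \<Rightarrow> 'a \<Rightarrow> real" and \<beta> :: real
    and \<rho> :: "nat \<Rightarrow> real" and m :: "nat \<Rightarrow> nat"
  assumes "prob_space M"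
    and "\<beta> > 0"
    and "prob_space.indep_vars M (\<lambda>_. borel) (\<lambda>(n, x). g n x) {(n, x). n \<ge> 1 \<and> x \<in> cube n}"
    and "\<And>n x. n \<ge> 1 \<Longrightarrow> x \<in> cube n \<Longrightarrow>
           distributed M lborel (g n x) (\<lambda>t. ennreal (std_normal_density t))"
    and "\<And>n. \<rho> n > 0"
    and "\<And>n. m n > 1"
    and "\<And>n. n \<ge> 1 \<Longrightarrow> \<rho> n \<ge> rho_plus n (m n)"
  shows "measure M {\<omega> \<in> space M. \<exists>N. \<forall>n\<ge>N. \<omega> \<in> Omega_tilde M \<beta> g n (\<rho> n) (m n)} = 1"
proof -
  have "ennreal (std_normal_density t) \<noteq> 0" for t
    using normal_density_pos[of 1 0 t] by (simp add: ennreal_eq_0_iff not_le)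
  hence weights: "hypercube_weights M \<beta> g (\<lambda>t. ennreal (std_normal_density t))"
    using assms(1-4) by (simp add: hypercube_weights_def hypercube_weights_axioms_def)
  have "2 \<le> m n" for n using assms(6)[of n] by simp
  with weights assms(5,7) show ?thesis by (rule hypercube_weights.prob_eventually_Omega_tilde)
qed

end
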